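(* Let $H$ be a 0-SYM filter such that: - $\operatorname{sign}(H(i))=1$; - the set of solutions of $H(z)=1$ lying on the unit circle $\{|z|=1\}$ is exactly $\{1\}$. Then $H(e^{i\xi})>0$ for all $\xi\in(-\pi,\pi)$.
   Context: A 0-SYM filter is a rational function $H(z)$ with real coefficients satisfying $H(z)^2+H(-z)^2=1$ and $H(z)=H(z^{-1})$. For such $H$ one has $H(i)=\pm1/\sqrt2$. *)

theory Defs
  imports "HOL-Analysis.Analysis" "HOL-Computational_Algebra.Computational_Algebra"
begin

text \<open>A rational function with real coefficients is represented in lowest terms as p/q
  with real polynomials p, q, q nonzero and coprime; it is evaluated on complex numbers.\<close>

definition rat_eval :: "real poly \<Rightarrow> real poly \<Rightarrow> complex \<Rightarrow> complex" where
  "rat_eval p q z = poly (map_poly complex_of_real p) z / poly (map_poly complex_of_real q) z"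

text \<open>0-SYM filter: H(z)^2 + H(-z)^2 = 1 and H(z) = H(1/z) as identities of rational
  functions, i.e. at every point where all occurring denominators are nonzero.\<close>

definition zero_sym :: "real poly \<Rightarrow> real poly \<Rightarrow> bool" where
  "zero_sym p q \<longleftrightarrow> q \<noteq> 0 \<and> coprime p q \<and>
     (\<forall>z. poly (map_poly complex_of_real q) z \<noteq> 0 \<longrightarrow>
          poly (map_poly complex_of_real q) (-z) \<noteq> 0 \<longrightarrow>
          (rat_eval p q z)^2 + (rat_eval p q (-z))^2 = 1) \<and>
     (\<forall>z. z \<noteq> 0 \<longrightarrow> poly (map_poly complex_of_real q) z \<noteq> 0 \<longrightarrow>
          poly (map_poly complex_of_real q) (inverse z) \<noteq> 0 \<longrightarrow>
          rat_eval p q z = rat_eval p q (inverse z))"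

end

theory Submission
  imports Defs "HOL-Computational_Algebra.Field_as_Ring"
begin

text \<open>On the unit circle \<open>1/z = cnj z\<close>, so \<open>H z = H (1/z) = cnj (H z)\<close> is real, and
  \<open>H(z)\<^sup>2 + H(-z)\<^sup>2 = 1\<close> gives \<open>\<bar>H\<bar> \<le> 1\<close>. By continuity \<open>\<bar>p\<bar> \<le> \<bar>q\<bar>\<close> on the whole circle,
  so a pole there would be a common root of the coprime \<open>p\<close> and \<open>q\<close>. Hence \<open>G t = H (cis t)\<close>
  is a continuous real function with \<open>(G t)\<^sup>2 + (G (t + \<pi>))\<^sup>2 = 1\<close>. For \<open>t \<in> (-\<pi>, 0)\<close> the sum
  \<open>G t + G (t + \<pi>)\<close> cannot be 1, since that would force \<open>G = 1\<close> at \<open>t\<close> or \<open>t + \<pi>\<close>, i.e.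
  \<open>H = 1\<close> at a point of the circle other than 1; at \<open>t = -\<pi>/2\<close> it equals \<open>2 H(\<i>) = sqrt 2\<close>.
  So the sum exceeds 1 on all of \<open>(-\<pi>, 0)\<close>, and as both terms are at most 1, both are positive.\<close>

lemma map_poly_of_real_add:
  "map_poly (of_real :: real \<Rightarrow> 'a::real_algebra_1) (p + q) = map_poly of_real p + map_poly of_real q"
  by (rule poly_eqI) (simp add: coeff_map_poly)

lemma map_poly_of_real_mult:
  "map_poly (of_real :: real \<Rightarrow> 'a::{real_algebra_1,comm_semiring_1}) (p * q) = map_poly of_real p * map_poly of_real q"
  by (rule poly_eqI) (simp add: coeff_map_poly coeff_mult)

lemma coprime_imp_no_common_root_of_real:
  fixes p q :: "real poly" and z :: "'a::{real_algebra_1,comm_ring_1}"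
  assumes "coprime p q"
  shows "poly (map_poly of_real p) z \<noteq> 0 \<or> poly (map_poly of_real q) z \<noteq> 0"
proof -
  obtain a b where "a * p + b * q = 1"
    using assms bezout_coefficients_fst_snd[of p q] by (metis coprime_iff_gcd_eq_1)
  then have "poly (map_poly of_real (a * p + b * q)) z = (1::'a)"
    by simp
  then show ?thesis
    by (auto simp: map_poly_of_real_add map_poly_of_real_mult)
qed

lemma continuous_le_zero_off_finite:
  fixes f :: "'a::metric_space \<Rightarrow> real"
  assumes "continuous_on S f" "connected S" "\<And>x. S \<noteq> {x}" "finite Z"
    and "\<And>x. x \<in> S \<Longrightarrow> x \<notin> Z \<Longrightarrow> f x \<le> 0" "a \<in> S"
  shows "f a \<le> 0"
proof -
  have "a islimpt S"
    using assms(2,6,3) by (rule connected_imp_perfect)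
  then have nontriv: "\<not> trivial_limit (at a within S)"
    by (simp add: trivial_limit_within)
  have "eventually (\<lambda>x. \<forall>z\<in>Z. x \<noteq> z) (at a within S)"
    using assms(4) by (intro eventually_ball_finite) (auto intro: eventually_neq_at_within)
  moreover have "eventually (\<lambda>x. x \<in> S) (at a within S)"
    by (simp add: eventually_at_filter)
  ultimately have "eventually (\<lambda>x. f x \<le> 0) (at a within S)"
    by eventually_elim (use assms(5) in blast)
  moreover have "(f \<longlongrightarrow> f a) (at a within S)"
    using assms(1,6) by (simp add: continuous_on_def)
  ultimately show ?thesis
    using tendsto_upperbound nontriv by blast
qed

lemma connected_continuous_above_level:
  fixes g :: "'a::topological_space \<Rightarrow> real"
  assumes "continuous_on S g" "connected S" "\<And>x. x \<in> S \<Longrightarrow> g x \<noteq> c"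
    and "a \<in> S" "g a > c" "x \<in> S"
  shows "g x > c"
proof (rule ccontr)
  assume "\<not> g x > c"
  have "connected (g ` S)"
    using assms(1,2) by (rule connected_continuous_image)
  moreover have "g x \<in> g ` S" "g a \<in> g ` S" "g x \<le> c" "c \<le> g a"
    using assms(4-6) \<open>\<not> g x > c\<close> by simp_all
  ultimately have "c \<in> g ` S"
    by (rule connectedD_interval)
  then show False
    using assms(3) by blast
qed

lemma rat_eval_cnj: "rat_eval p q (cnj z) = cnj (rat_eval p q z)"
  by (simp add: rat_eval_def poly_cnj_real[symmetric] coeff_map_poly)

lemma zero_sym_real_on_circle:
  assumes "zero_sym p q" "cmod z = 1" "poly (map_poly complex_of_real q) z \<noteq> 0"
  shows "rat_eval p q z \<in> \<real>"
proof -
  have inv: "inverse z = cnj z"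
    using divide_conv_cnj[OF assms(2), of 1] by (simp add: inverse_eq_divide)
  have "z \<noteq> 0"
    using assms(2) by auto
  moreover have "poly (map_poly complex_of_real q) (inverse z) \<noteq> 0"
    using assms(3) by (simp add: inv poly_cnj_real[symmetric] coeff_map_poly)
  ultimately have "rat_eval p q z = rat_eval p q (inverse z)"
    using assms(1,3) unfolding zero_sym_def by blast
  then show ?thesis
    by (simp add: Reals_cnj_iff inv rat_eval_cnj)
qed

lemma zero_sym_norm_le_1_on_circle:
  assumes "zero_sym p q" "cmod z = 1"
    and "poly (map_poly complex_of_real q) z \<noteq> 0" "poly (map_poly complex_of_real q) (-z) \<noteq> 0"
  shows "cmod (rat_eval p q z) \<le> 1"
proof -
  obtain a b where a: "rat_eval p q z = of_real a" and b: "rat_eval p q (-z) = of_real b"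
    using zero_sym_real_on_circle[OF assms(1,2,3)] zero_sym_real_on_circle[OF assms(1) _ assms(4)]
      assms(2) by (auto elim!: Reals_cases)
  have "(rat_eval p q z)^2 + (rat_eval p q (-z))^2 = 1"
    using assms(1,3,4) unfolding zero_sym_def by blast
  then have "a^2 + b^2 = 1"
    unfolding a b by (metis of_real_add of_real_eq_1_iff of_real_power)
  then have "a^2 \<le> 1"
    by (metis le_add_same_cancel1 zero_le_power2)
  then show ?thesis
    by (simp add: a abs_square_le_1)
qed

lemma zero_sym_norm_poly_le_on_circle:
  assumes "zero_sym p q" "cmod w = 1"
  shows "cmod (poly (map_poly complex_of_real p) w) \<le> cmod (poly (map_poly complex_of_real q) w)"
proof -
  let ?P = "poly (map_poly complex_of_real p)" and ?Q = "poly (map_poly complex_of_real q)"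
  define Z where "Z = {z. ?Q z = 0} \<union> uminus ` {z. ?Q z = 0}"
  have "map_poly complex_of_real q \<noteq> 0"
    using assms(1) by (simp add: zero_sym_def map_poly_eq_0_iff)
  then have "finite Z"
    unfolding Z_def by (simp add: poly_roots_finite)
  have "continuous_on (sphere 0 1) (\<lambda>z. cmod (?P z) - cmod (?Q z))"
    by (intro continuous_intros)
  moreover have "connected (sphere (0::complex) 1)"
    by (simp add: connected_sphere)
  moreover have "sphere (0::complex) 1 \<noteq> {x}" for x
  proof -
    have "1 \<in> sphere (0::complex) 1" "-1 \<in> sphere (0::complex) 1"
      by simp_all
    then show ?thesis
      by (metis one_neq_neg_one singletonD)
  qed
  moreover note \<open>finite Z\<close>
  moreover have "cmod (?P z) - cmod (?Q z) \<le> 0" if "z \<in> sphere 0 1" "z \<notin> Z" for z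
  proof -
    have Q_z: "?Q z \<noteq> 0"
      using that(2) unfolding Z_def by blast
    have Q_minus_z: "?Q (-z) \<noteq> 0"
    proof
      assume "?Q (-z) = 0"
      then have "z \<in> uminus ` {z. ?Q z = 0}"
        by (intro image_eqI[of z uminus "-z"]) simp_all
      then show False
        using that(2) unfolding Z_def by blast
    qed
    have "cmod (rat_eval p q z) \<le> 1"
      using zero_sym_norm_le_1_on_circle[OF assms(1) _ Q_z Q_minus_z] that(1) by simp
    then show ?thesis
      using Q_z by (simp add: rat_eval_def norm_divide divide_le_eq_1)
  qed
  moreover have "w \<in> sphere 0 1"
    using assms(2) by simp
  ultimately have "cmod (?P w) - cmod (?Q w) \<le> 0"
    by (rule continuous_le_zero_off_finite)
  then show ?thesis
    by simp
qed

lemma zero_sym_no_pole_on_circle: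
  assumes "zero_sym p q" "cmod w = 1"
  shows "poly (map_poly complex_of_real q) w \<noteq> 0"
  using zero_sym_norm_poly_le_on_circle[OF assms] coprime_imp_no_common_root_of_real[of p q w] assms(1)
  by (auto simp: zero_sym_def)

lemma zero_sym_restrict_to_circle:
  assumes "zero_sym p q"
  obtains G :: "real \<Rightarrow> real"
  where "continuous_on UNIV G" "\<And>t. rat_eval p q (cis t) = of_real (G t)"
    and "\<And>t. (G t)^2 + (G (t + pi))^2 = 1"
proof
  let ?H = "\<lambda>t. rat_eval p q (cis t)"
  have no_pole: "poly (map_poly complex_of_real q) (cis t) \<noteq> 0" for t
    using assms by (rule zero_sym_no_pole_on_circle) simp
  show H_real: "?H t = of_real (Re (?H t))" for t
    using zero_sym_real_on_circle[OF assms _ no_pole] by (simp add: of_real_Re)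
  show "continuous_on UNIV (\<lambda>t. Re (?H t))"
    unfolding rat_eval_def using no_pole by (intro continuous_intros) auto
  show "(Re (?H t))^2 + (Re (?H (t + pi)))^2 = 1" for t
  proof -
    have "poly (map_poly complex_of_real q) (- cis t) \<noteq> 0"
      using no_pole[of "t + pi"] by (simp add: minus_cis)
    then have "(?H t)^2 + (rat_eval p q (- cis t))^2 = 1"
      using assms no_pole[of t] unfolding zero_sym_def by blast
    then have "of_real ((Re (?H t))^2 + (Re (?H (t + pi)))^2) = (1::complex)"
      by (metis H_real minus_cis of_real_add of_real_power)
    then show ?thesis
      by (simp only: of_real_eq_1_iff)
  qed
qed

lemma zero_sym_eval_minus_ii:
  assumes "zero_sym p q"
  shows "rat_eval p q (-\<i>) = rat_eval p q \<i>"
proof -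
  have "poly (map_poly complex_of_real q) \<i> \<noteq> 0" "poly (map_poly complex_of_real q) (inverse \<i>) \<noteq> 0"
    using zero_sym_no_pole_on_circle[OF assms] by simp_all
  then have "rat_eval p q \<i> = rat_eval p q (inverse \<i>)"
    using assms unfolding zero_sym_def by (meson complex_i_not_zero)
  then show ?thesis
    by simp
qed

lemma shifted_squares_sum_one_pos:
  fixes G :: "real \<Rightarrow> real"
  assumes cont: "continuous_on UNIV G"
    and squares: "\<And>t. (G t)^2 + (G (t + pi))^2 = 1"
    and one: "\<And>t. G t = 1 \<Longrightarrow> sin t = 0"
    and symmetric: "G (-pi/2) = G (pi/2)" and positive: "G (pi/2) > 0"
    and t: "-pi < t" "t < 0"
  shows "G t > 0 \<and> G (t + pi) > 0"
proof -
  define g where "g s = G s + G (s + pi)" for s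
  have bounded: "G s \<le> 1" for s
  proof -
    have "(G s)^2 \<le> 1"
      using squares[of s] by (metis le_add_same_cancel1 zero_le_power2)
    then show ?thesis
      by (simp add: abs_square_le_1 abs_le_iff)
  qed
  have avoids_1: "g s \<noteq> 1" if "-pi < s" "s < 0" for s
  proof
    assume "g s = 1"
    then have complement: "G (s + pi) = 1 - G s"
      unfolding g_def by simp
    then have "(G s)^2 + (1 - G s)^2 = 1"
      using squares[of s] by simp
    then have "G s * (G s - 1) = 0"
      by algebra
    then have "G s = 1 \<or> G (s + pi) = 1"
      using complement by (smt (verit) mult_eq_0_iff)
    moreover have "sin s < 0" "sin (s + pi) > 0"
      using sin_gt_zero[of "-s"] sin_gt_zero[of "s + pi"] that by auto
    ultimately show False
      using one[of s] one[of "s + pi"] by auto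
  qed
  have "continuous_on UNIV (\<lambda>s. G (s + pi))"
    by (rule continuous_on_compose2[OF cont]) (auto intro: continuous_intros)
  then have "continuous_on UNIV g"
    unfolding g_def by (intro continuous_on_add cont)
  then have "continuous_on {-pi<..<0} g"
    using continuous_on_subset subset_UNIV by blast
  moreover have "g (-pi/2) > 1"
  proof -
    have "-pi/2 + pi = pi/2"
      by simp
    then have "(G (pi/2))^2 + (G (pi/2))^2 = 1"
      using squares[of "-pi/2"] unfolding symmetric by simp
    then have "(2 * G (pi/2))^2 = 2"
      by (simp add: power_mult_distrib)
    then have "1 < 2 * G (pi/2)"
      using positive power2_less_imp_less[of 1 "2 * G (pi/2)"] by simp
    then show ?thesis
      using symmetric by (simp add: g_def)
  qed
  ultimately have "g t > 1"
    using avoids_1 t by (intro connected_continuous_above_level[of "{-pi<..<0}" g 1 "-pi/2" t]) simp_all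
  then show ?thesis
    using bounded[of t] bounded[of "t + pi"] unfolding g_def by linarith
qed

theorem proposition1:
  fixes p q :: "real poly"
  assumes "zero_sym p q"
    and "sgn (rat_eval p q \<i>) = 1"
    and "{z. cmod z = 1 \<and> rat_eval p q z = 1} = {1}"
  shows "\<forall>\<xi>::real. -pi < \<xi> \<and> \<xi> < pi \<longrightarrow>
           Im (rat_eval p q (cis \<xi>)) = 0 \<and> Re (rat_eval p q (cis \<xi>)) > 0"
proof -
  obtain G where cont: "continuous_on UNIV G" and H_G: "\<And>t. rat_eval p q (cis t) = of_real (G t)"
    and squares: "\<And>t. (G t)^2 + (G (t + pi))^2 = 1"
    using zero_sym_restrict_to_circle[OF assms(1)] by blast
  have one: "sin t = 0" if "G t = 1" for t
  proof -
    have "cis t \<in> {z. cmod z = 1 \<and> rat_eval p q z = 1}"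
      using that by (simp add: H_G)
    then have "cis t = 1"
      using assms(3) by blast
    then show ?thesis
      by (metis cis.sel(2) one_complex.sel(2))
  qed
  have "G (pi/2) > 0"
    using assms(2) H_G[of "pi/2"] by (simp add: sgn_of_real sgn_1_pos)
  moreover have "G (-pi/2) = G (pi/2)"
    using zero_sym_eval_minus_ii[OF assms(1)] H_G[of "pi/2"] H_G[of "-pi/2"] by (simp add: minus_cis)
  ultimately have pos: "G t > 0 \<and> G (t + pi) > 0" if "-pi < t" "t < 0" for t
    using shifted_squares_sum_one_pos[OF cont squares one] that by blast
  have "1 \<in> {z. cmod z = 1 \<and> rat_eval p q z = 1}"
    using assms(3) by blast
  then have "G 0 = 1"
    using H_G[of 0] by simp
  then have "G \<xi> > 0" if "-pi < \<xi>" "\<xi> < pi" for \<xi>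
    using pos[of \<xi>] pos[of "\<xi> - pi"] that by (cases "\<xi> < 0"; cases "\<xi> = 0") auto
  then show ?thesis
    by (simp add: H_G)
qed

end
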